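(* Let $\lambda$ and $\mu$ be infinite cardinals with $\mu\leq 2^\lambda$. Then $\mu\not\to_{hc}(\mu)^2_\lambda$: there is a coloring $c:[\mu]^2\to\lambda$ such that for no $\xi<\lambda$ and no $X\subseteq\mu$ with $|X|=\mu$ is the graph $(X,c^{-1}(\xi)\cap[X]^2)$ highly connected.
   Context: $[S]^2$ denotes the set of $2$-element subsets of $S$. A graph $G=(V,E)$ is highly connected if for every $D\subseteq V$ with $|D|<|V|$ the graph induced on $V\setminus D$ is connected. For cardinals $\nu,\mu,\lambda$, $\nu\to_{hc}(\mu)^2_\lambda$ means: for every $c:[\nu]^2\to\lambda$ there exist $\xi<\lambda$ and $X\subseteq\nu$ with $|X|=\mu$ such that $(X,c^{-1}(\xi)\cap[X]^2)$ is highly connected; $\not\to_{hc}$ is its negation. *)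

theory Defs
  imports Main
begin

text \<open>Cardinals are represented by sets: a cardinal is the cardinality |S| of a set S
  (the library's card_of, with orders \<le>o, <o, =o).\<close>

definition two_subsets :: "'a set \<Rightarrow> 'a set set" where
  "two_subsets S = {e. e \<subseteq> S \<and> card e = 2}"

definition graph_connected :: "'a set \<Rightarrow> 'a set set \<Rightarrow> bool" where
  "graph_connected V E \<longleftrightarrow>
     (\<forall>x\<in>V. \<forall>y\<in>V. (\<lambda>u v. u \<in> V \<and> v \<in> V \<and> {u, v} \<in> E)\<^sup>*\<^sup>* x y)"

definition highly_connected :: "'a set \<Rightarrow> 'a set set \<Rightarrow> bool" where
  "highly_connected V E \<longleftrightarrow>
     (\<forall>D. D \<subseteq> V \<and> (card_of D, card_of V) \<in> ordLess \<longrightarrow>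
        graph_connected (V - D) {e \<in> E. e \<subseteq> V - D})"

text \<open>hc_arrow N M L  means  |N| \<rightarrow>_hc (|M|)^2_|L|.\<close>
definition hc_arrow :: "'a set \<Rightarrow> 'c set \<Rightarrow> 'b set \<Rightarrow> bool" where
  "hc_arrow N M L \<longleftrightarrow>
     (\<forall>c :: 'a set \<Rightarrow> 'b. (\<forall>e\<in>two_subsets N. c e \<in> L) \<longrightarrow>
        (\<exists>\<xi>\<in>L. \<exists>X. X \<subseteq> N \<and> (card_of X, card_of M) \<in> ordIso \<and>
           highly_connected X {e \<in> two_subsets X. c e = \<xi>}))"

end

theory Submission
  imports Defs
begin

text \<open>Since |M| \<le> 2^|L|, the points of M can be labelled by subsets F x of L that are
  pairwise \<subseteq>-incomparable.  Well-order M in type |M| and colour a pair x < y by some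
  \<xi> \<in> F x - F y.  In a colour class \<xi>, any vertex b with \<xi> \<notin> F b (e.g. the upper end of
  an edge) is adjacent only to its predecessors, of which there are fewer than |M|; removing
  them separates b from the rest, so no colour class on |M| vertices is highly connected.\<close>

unbundle cardinal_syntax

definition incomparable_on :: "'a set \<Rightarrow> ('a \<Rightarrow> 'b set) \<Rightarrow> bool" where
  "incomparable_on A F \<longleftrightarrow> (\<forall>x\<in>A. \<forall>y\<in>A. x \<noteq> y \<longrightarrow> \<not> F x \<subseteq> F y)"

lemma ex_incomparable_family_if_card_le_Pow:
  assumes "infinite L" and "|M| \<le>o |Pow L|"
  obtains F :: "'a \<Rightarrow> 'b set"
  where "\<And>x. F x \<subseteq> L" and "incomparable_on M F"
proof -
  obtain f where f: "inj_on f M" "f ` M \<subseteq> Pow L"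
    using assms(2) card_of_ordLeq[of M "Pow L"] by auto
  have "|L <+> L| \<le>o |L|"
    using card_of_Plus_infinite1[OF assms(1) ordLeq_refl[OF card_of_Card_order]]
    by (rule ordIso_imp_ordLeq)
  then obtain h where h: "inj_on h (L <+> L)" "h ` (L <+> L) \<subseteq> L"
    using card_of_ordLeq[of "L <+> L" L] by auto
  \<comment> \<open>S \<mapsto> S \<uplus> (L - S) turns distinct subsets of L into incomparable ones of L <+> L\<close>
  define G where "G S = Inl ` (S \<inter> L) \<union> Inr ` (L - S)" for S
  have G: "G S \<subseteq> L <+> L" for S
    by (auto simp: G_def)
  have G_incomparable: "\<not> G S \<subseteq> G T" if "S \<subseteq> L" "T \<subseteq> L" "S \<noteq> T" for S T
  proof -
    from that obtain l where "l \<in> S - T \<or> l \<in> T - S" by blast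
    then have "Inl l \<in> G S - G T \<or> Inr l \<in> G S - G T"
      using that by (auto simp: G_def)
    then show ?thesis by blast
  qed
  show thesis
  proof
    show "h ` G (f x) \<subseteq> L" for x
      using G h(2) by blast
    show "incomparable_on M (\<lambda>x. h ` G (f x))"
      unfolding incomparable_on_def
    proof (intro ballI impI)
      fix x y assume "x \<in> M" "y \<in> M" "x \<noteq> y"
      then have "f x \<subseteq> L" "f y \<subseteq> L" "f x \<noteq> f y"
        using f by (auto simp: inj_on_def)
      then obtain z where z: "z \<in> G (f x)" "z \<notin> G (f y)"
        using G_incomparable by blast
      then have "z \<in> L <+> L"
        using G by blast
      then have "h z \<notin> h ` G (f y)"
        using inj_on_image_mem_iff[OF h(1) _ G] z(2) by blast
      with z(1) show "\<not> h ` G (f x) \<subseteq> h ` G (f y)" by blast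
    qed
  qed
qed

lemma graph_connected_neighbourE:
  assumes "graph_connected V E" and "x \<in> V" "y \<in> V" "x \<noteq> y"
  obtains z where "z \<in> V" "{x, z} \<in> E"
proof -
  have "(\<lambda>u v. u \<in> V \<and> v \<in> V \<and> {u, v} \<in> E)\<^sup>*\<^sup>* x y"
    using assms unfolding graph_connected_def by blast
  then show thesis
    by (rule converse_rtranclpE) (use assms(4) that in auto)
qed

lemma infinite_diff_card_ordLess:
  assumes "infinite X" and "|D| <o |X|"
  shows "infinite (X - D)"
proof
  assume "finite (X - D)"
  then have "|X - D| <o |X|"
    using finite_ordLess_infinite[OF card_of_Well_order card_of_Well_order] assms(1)
    by (simp add: Field_card_of)
  then have "|D \<union> (X - D)| <o |X|"
    using card_of_Un_ordLess_infinite[OF assms] by blast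
  moreover have "|X| \<le>o |D \<union> (X - D)|"
    by (rule card_of_mono1) blast
  ultimately show False
    using not_ordLess_ordLeq by blast
qed

text \<open>Deleting the fewer than |X| predecessors of b cannot disconnect b from the rest of X.\<close>
lemma highly_connected_later_neighbourE:
  assumes r: "Card_order r" and X: "X \<subseteq> Field r" "|X| =o r" "infinite X"
    and hc: "highly_connected X E" and b: "b \<in> X"
  obtains u where "u \<in> X" "u \<notin> underS r b" "{b, u} \<in> E"
proof -
  define D where "D = X \<inter> underS r b"
  have "|D| \<le>o |underS r b|"
    unfolding D_def by (rule card_of_mono1) blast
  also have "|underS r b| <o r"
    using card_of_underS[OF r] b X(1) by blast
  also have "r =o |X|"
    using X(2) by (rule ordIso_symmetric)
  finally have D_small: "|D| <o |X|" .
  then have "graph_connected (X - D) {e \<in> E. e \<subseteq> X - D}"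
    using hc unfolding highly_connected_def D_def by blast
  moreover have b_XD: "b \<in> X - D"
    using b unfolding D_def underS_def by auto
  moreover obtain y where "y \<in> X - D" "b \<noteq> y"
  proof -
    have "infinite (X - D - {b})"
      using infinite_diff_card_ordLess[OF X(3) D_small] by simp
    then show thesis
      using that infinite_imp_nonempty by blast
  qed
  ultimately obtain u where "u \<in> X - D" "{b, u} \<in> {e \<in> E. e \<subseteq> X - D}"
    by (rule graph_connected_neighbourE)
  then show thesis
    using that unfolding D_def by blast
qed

definition incomparable_colouring :: "'a rel \<Rightarrow> ('a \<Rightarrow> 'b set) \<Rightarrow> 'a set \<Rightarrow> 'b" where
  "incomparable_colouring r F e =
     (SOME \<xi>. \<exists>x y. e = {x, y} \<and> x \<noteq> y \<and> (x, y) \<in> r \<and> \<xi> \<in> F x \<and> \<xi> \<notin> F y)"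

lemma incomparable_colouringE:
  assumes r: "total_on A r"
    and F: "incomparable_on A F"
    and e: "e \<in> two_subsets A"
  obtains x y where "e = {x, y}" "x \<noteq> y" "(x, y) \<in> r"
    "incomparable_colouring r F e \<in> F x" "incomparable_colouring r F e \<notin> F y"
proof -
  from e obtain u v where uv: "e = {u, v}" "u \<noteq> v" "u \<in> A" "v \<in> A"
    by (auto simp: two_subsets_def card_2_iff)
  have "\<exists>x y. e = {x, y} \<and> x \<noteq> y \<and> (x, y) \<in> r \<and> x \<in> A \<and> y \<in> A"
  proof (cases "(u, v) \<in> r")
    case True
    with uv show ?thesis by blast
  next
    case False
    with r uv have "(v, u) \<in> r"
      unfolding total_on_def by blast
    with uv show ?thesis
      by (intro exI[of _ v] exI[of _ u]) (auto simp: insert_commute)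
  qed
  then obtain x y where xy: "e = {x, y}" "x \<noteq> y" "(x, y) \<in> r" "x \<in> A" "y \<in> A"
    by blast
  then obtain \<xi> where "\<xi> \<in> F x" "\<xi> \<notin> F y"
    using F unfolding incomparable_on_def by blast
  with xy have "\<exists>\<xi> x y. e = {x, y} \<and> x \<noteq> y \<and> (x, y) \<in> r \<and> \<xi> \<in> F x \<and> \<xi> \<notin> F y"
    by blast
  then have "\<exists>x y. e = {x, y} \<and> x \<noteq> y \<and> (x, y) \<in> r \<and>
      incomparable_colouring r F e \<in> F x \<and> incomparable_colouring r F e \<notin> F y"
    unfolding incomparable_colouring_def by (rule someI_ex)
  then show thesis
    using that by (elim exE conjE) simp
qed

lemma incomparable_colour_class_not_highly_connected:
  assumes r: "Card_order r"
    and F: "incomparable_on (Field r) F"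
    and X: "X \<subseteq> Field r" "|X| =o r" "infinite X"
  shows "\<not> highly_connected X {e \<in> two_subsets X. incomparable_colouring r F e = \<xi>}"
    (is "\<not> highly_connected X ?E")
proof
  assume hc: "highly_connected X ?E"
  have total: "total_on (Field r) r"
    using r unfolding card_order_on_def well_order_on_def linear_order_on_def by blast
  have edge: "\<exists>x y. {u, v} = {x, y} \<and> x \<noteq> y \<and> (x, y) \<in> r \<and> \<xi> \<in> F x \<and> \<xi> \<notin> F y"
    if "{u, v} \<in> ?E" for u v
  proof -
    have "{u, v} \<in> two_subsets (Field r)"
      using that X(1) by (auto simp: two_subsets_def)
    then obtain x y where "{u, v} = {x, y}" "x \<noteq> y" "(x, y) \<in> r"
      "incomparable_colouring r F {u, v} \<in> F x" "incomparable_colouring r F {u, v} \<notin> F y"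
      by (rule incomparable_colouringE[OF total F])
    with that show ?thesis by auto
  qed
  obtain x0 where "x0 \<in> X"
    using X(3) infinite_imp_nonempty by blast
  then obtain z where "z \<in> X" "{x0, z} \<in> ?E"
    by (rule highly_connected_later_neighbourE[OF r X hc])
  then obtain x b where "{x0, z} = {x, b}" "\<xi> \<notin> F b"
    using edge by blast
  with \<open>x0 \<in> X\<close> \<open>z \<in> X\<close> have b: "b \<in> X" "\<xi> \<notin> F b"
    by (auto simp: doubleton_eq_iff)
  from b(1) obtain u where u: "u \<in> X" "u \<notin> underS r b" "{b, u} \<in> ?E"
    by (rule highly_connected_later_neighbourE[OF r X hc])
  then obtain x y where "{b, u} = {x, y}" "x \<noteq> y" "(x, y) \<in> r" "\<xi> \<in> F x"
    using edge by blast
  with b(2) have "u \<noteq> b" "(u, b) \<in> r"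
    by (auto simp: doubleton_eq_iff)
  then show False
    using u(2) unfolding underS_def by blast
qed

theorem mainTheorem4:
  fixes M :: "'a set" and L :: "'b set"
  assumes "infinite L" and "infinite M" and "(card_of M, card_of (Pow L)) \<in> ordLeq"
  shows "\<not> hc_arrow M M L"
proof
  assume arrow: "hc_arrow M M L"
  obtain F where FL: "\<And>x. F x \<subseteq> L"
    and F: "incomparable_on M F"
    using ex_incomparable_family_if_card_le_Pow[OF assms(1,3)] by blast
  let ?c = "incomparable_colouring (card_of M) F"
  have total: "total_on M (card_of M)"
    using card_of_Well_order[of M]
    by (simp add: well_order_on_def linear_order_on_def Field_card_of)
  have "?c e \<in> L" if e: "e \<in> two_subsets M" for e
  proof -
    obtain x where "?c e \<in> F x"
      using incomparable_colouringE[OF total F e] by blast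
    with FL show ?thesis by blast
  qed
  with arrow obtain \<xi> X where X: "X \<subseteq> M" "|X| =o |M|"
    and hc: "highly_connected X {e \<in> two_subsets X. ?c e = \<xi>}"
    unfolding hc_arrow_def by blast
  have "infinite X"
    using card_of_ordIso_finite[OF X(2)] assms(2) by simp
  then have "\<not> highly_connected X {e \<in> two_subsets X. ?c e = \<xi>}"
    by (intro incomparable_colour_class_not_highly_connected)
      (use F X in \<open>simp_all add: card_of_card_order_on Field_card_of\<close>)
  with hc show False by contradiction
qed

end
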